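(* Suppose $pn\ge\log n$. Then for all sufficiently large $n$ and every integer $t$ with $n^{24/25}\le t\le\frac n5$, with probability at least $1-n^{-t/120}$, every set $T$ of $t$ vertices of $G(n,p)$ has at least twice as many edges between $T$ and $[n]\setminus T$ as edges with both endpoints in $T$.
   Context: $G(n,p)$ is the Erdős–Rényi random graph on $[n]$, each edge present independently with probability $p$. *)

theory Defs
  imports "HOL-Probability.Probability"
begin

definition all_edges :: "nat \<Rightarrow> nat set set" where
  "all_edges n = {e. e \<subseteq> {1..n} \<and> card e = 2}"

definition gnp :: "nat \<Rightarrow> real \<Rightarrow> nat set set pmf" where
  "gnp n p = map_pmf (\<lambda>f. {e \<in> all_edges n. f e})
                     (Pi_pmf (all_edges n) False (\<lambda>_. bernoulli_pmf p))"

definition edges_in :: "nat set set \<Rightarrow> nat set \<Rightarrow> nat set set" where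
  "edges_in E T = {e \<in> E. e \<subseteq> T}"

definition edges_between :: "nat set set \<Rightarrow> nat set \<Rightarrow> nat set \<Rightarrow> nat set set" where
  "edges_between E T S = {e \<in> E. \<exists>x y. e = {x, y} \<and> x \<in> T \<and> y \<in> S}"

end

theory Submission
  imports Defs
begin

text \<open>For a fixed t-set T, weight each present edge inside T by 9/4 and each present edge
  leaving T by 2/3. A bad graph (fewer than twice as many crossing as inner edges) has total
  weight at least 1, so by Markov's inequality its probability is at most the expected weight,
  which factorises over the independent edges into (1 + 5q/4)^(t choose 2) (1 - q/3)^(t(n-t))
  \<le> exp(-17/120 q t n) when t \<le> n/5. A union bound over the (en/t)^t sets T, together with
  q n \<ge> ln n and t \<ge> n^(24/25), leaves n^(-t/120).\<close>

lemma prod_if_disjoint: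
  fixes x y :: "'b::comm_monoid_mult"
  assumes "finite A" "I \<subseteq> A" "B \<subseteq> A" "I \<inter> B = {}"
  shows "(\<Prod>e\<in>A. if e \<in> I then x else if e \<in> B then y else 1) = x ^ card I * y ^ card B"
proof -
  have "(\<Prod>e\<in>A. if e \<in> I then x else if e \<in> B then y else 1)
      = (\<Prod>e\<in>A. (if e \<in> I then x else 1) * (if e \<in> B then y else 1))"
    using assms(4) by (intro prod.cong) auto
  also have "\<dots> = x ^ card I * y ^ card B"
    using assms(1-3) by (simp add: prod.distrib prod.If_cases Int_absorb1 Int_absorb2 inf_commute)
  finally show ?thesis .
qed

lemma prob_all_ge_one_minus_sum:
  assumes "finite \<T>"
  shows "measure_pmf.prob M {x. \<forall>T\<in>\<T>. P T x} \<ge> 1 - (\<Sum>T\<in>\<T>. measure_pmf.prob M {x. \<not> P T x})"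
proof -
  have "{x. \<forall>T\<in>\<T>. P T x} = space (measure_pmf M) - (\<Union>T\<in>\<T>. {x. \<not> P T x})"
    by auto
  hence "measure_pmf.prob M {x. \<forall>T\<in>\<T>. P T x} = 1 - measure_pmf.prob M (\<Union>T\<in>\<T>. {x. \<not> P T x})"
    by (simp only:) (rule measure_pmf.prob_compl, simp)
  moreover have "measure_pmf.prob M (\<Union>T\<in>\<T>. {x. \<not> P T x}) \<le> (\<Sum>T\<in>\<T>. measure_pmf.prob M {x. \<not> P T x})"
    by (rule measure_pmf.finite_measure_subadditive_finite[OF assms]) simp
  ultimately show ?thesis by linarith
qed

lemma expectation_Pi_bernoulli_prod:
  fixes c :: "'a \<Rightarrow> real"
  assumes "finite A" "0 \<le> q" "q \<le> 1" "\<And>e. c e \<ge> 0"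
  shows "measure_pmf.expectation (Pi_pmf A False (\<lambda>_. bernoulli_pmf q))
           (\<lambda>f. \<Prod>e\<in>A. if f e then c e else 1) = (\<Prod>e\<in>A. 1 + q * (c e - 1))"
  using assms
  by (subst expectation_prod_Pi_pmf)
     (auto intro!: integrable_measure_pmf_finite prod.cong simp: algebra_simps)

lemma prob_Pi_bernoulli_card_le_twice:
  assumes A: "finite A" "I \<subseteq> A" "B \<subseteq> A" "I \<inter> B = {}" and q: "0 \<le> q" "q \<le> 1"
  shows "measure_pmf.prob (Pi_pmf A False (\<lambda>_. bernoulli_pmf q))
           {f. card {e\<in>B. f e} \<le> 2 * card {e\<in>I. f e}}
         \<le> exp (q * (5/4 * card I - 1/3 * card B))"
proof -
  define M where "M = Pi_pmf A False (\<lambda>_. bernoulli_pmf q)"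
  define c :: "'a \<Rightarrow> real" where "c e = (if e \<in> I then 9/4 else if e \<in> B then 2/3 else 1)" for e
  define W where "W f = (\<Prod>e\<in>A. if f e then c e else 1)" for f
  have W_eq: "W f = (9/4) ^ card {e\<in>I. f e} * (2/3) ^ card {e\<in>B. f e}" for f
  proof -
    have "W f = (\<Prod>e\<in>A. if e \<in> {e\<in>I. f e} then 9/4 else if e \<in> {e\<in>B. f e} then 2/3 else 1)"
      unfolding W_def c_def by (intro prod.cong) auto
    also have "\<dots> = (9/4) ^ card {e\<in>I. f e} * (2/3) ^ card {e\<in>B. f e}"
      using A by (intro prod_if_disjoint) auto
    finally show ?thesis .
  qed
  have bad_heavy: "{f. card {e\<in>B. f e} \<le> 2 * card {e\<in>I. f e}} \<subseteq> {f \<in> space (measure_pmf M). 1 \<le> W f}"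
  proof safe
    fix f assume le: "card {e\<in>B. f e} \<le> 2 * card {e\<in>I. f e}"
    have "(1::real) = (3/2) ^ card {e\<in>B. f e} * (2/3) ^ card {e\<in>B. f e}"
      by (simp flip: power_mult_distrib)
    also have "\<dots> \<le> (3/2) ^ (2 * card {e\<in>I. f e}) * (2/3) ^ card {e\<in>B. f e}"
      by (intro mult_right_mono power_increasing le) auto
    also have "\<dots> = W f" unfolding W_eq by (simp add: power_mult power2_eq_square)
    finally show "1 \<le> W f" .
  qed simp
  have c_nonneg: "c e \<ge> 0" for e unfolding c_def by auto
  have "measure_pmf.prob M {f. card {e\<in>B. f e} \<le> 2 * card {e\<in>I. f e}}
      \<le> measure_pmf.prob M {f \<in> space (measure_pmf M). 1 \<le> W f}"
    by (rule measure_pmf.finite_measure_mono[OF bad_heavy]) simp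
  also have "\<dots> \<le> measure_pmf.expectation M W / 1"
    unfolding M_def W_def using A(1) c_nonneg
    by (intro integral_Markov_inequality_measure integrable_prod_Pi_pmf integrable_measure_pmf_finite)
       (auto intro!: prod_nonneg)
  also have "\<dots> = (\<Prod>e\<in>A. if e \<in> I then 1 + 5*q/4 else if e \<in> B then 1 - q/3 else 1)"
    unfolding M_def W_def using A(1) q c_nonneg
    by (simp add: expectation_Pi_bernoulli_prod) (intro prod.cong, auto simp: c_def)
  also have "\<dots> = (1 + 5*q/4) ^ card I * (1 - q/3) ^ card B"
    using A by (rule prod_if_disjoint)
  also have "\<dots> \<le> exp (5*q/4) ^ card I * exp (- q/3) ^ card B"
    using q by (intro mult_mono power_mono) (auto simp del: exp_ge_add_one_self
        intro: exp_ge_add_one_self[THEN order.trans[rotated]])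
  also have "\<dots> = exp (q * (5/4 * card I - 1/3 * card B))"
    by (simp add: exp_of_nat_mult[symmetric] exp_add[symmetric] algebra_simps)
  finally show ?thesis unfolding M_def .
qed

lemma finite_all_edges: "finite (all_edges n)"
  by (rule finite_subset[of _ "Pow {1..n}"]) (auto simp: all_edges_def)

lemma prob_gnp:
  "measure_pmf.prob (gnp n q) S
     = measure_pmf.prob (Pi_pmf (all_edges n) False (\<lambda>_. bernoulli_pmf q)) {f. {e \<in> all_edges n. f e} \<in> S}"
  unfolding gnp_def by (simp add: map_pmf_rep_eq measure_distr vimage_def)

lemma card_edges_in_all_edges:
  assumes "T \<subseteq> {1..n}"
  shows "card (edges_in (all_edges n) T) = card T choose 2"
proof -
  have "edges_in (all_edges n) T = {B. B \<subseteq> T \<and> card B = 2}"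
    using assms unfolding edges_in_def all_edges_def by auto
  thus ?thesis using n_subsets finite_subset[OF assms] by simp
qed

lemma card_edges_between_all_edges_ge:
  assumes "T \<subseteq> {1..n}"
  shows "card T * (n - card T) \<le> card (edges_between (all_edges n) T ({1..n} - T))"
proof -
  have "(\<lambda>(x, y). {x, y}) ` (T \<times> ({1..n} - T)) \<subseteq> edges_between (all_edges n) T ({1..n} - T)"
    using assms unfolding edges_between_def all_edges_def by (auto simp: card_insert_if; blast)
  moreover have "inj_on (\<lambda>(x, y). {x, y}) (T \<times> ({1..n} - T))"
    by (auto simp: inj_on_def doubleton_eq_iff)
  moreover have "card (T \<times> ({1..n} - T)) = card T * (n - card T)"
    using assms by (simp add: card_cartesian_product card_Diff_subset finite_subset)
  moreover have "finite (edges_between (all_edges n) T ({1..n} - T))"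
    using finite_all_edges by (rule finite_subset[rotated]) (auto simp: edges_between_def)
  ultimately show ?thesis by (metis card_image card_mono)
qed

lemma prob_gnp_few_crossing_edges:
  fixes q :: real and T :: "nat set"
  assumes q: "0 \<le> q" "q \<le> 1" and T: "T \<subseteq> {1..n}" "5 * card T \<le> n"
  shows "measure_pmf.prob (gnp n q)
           {E. \<not> 2 * card (edges_in E T) \<le> card (edges_between E T ({1..n} - T))}
         \<le> exp (- 17/120 * q * card T * n)"
proof -
  define A where "A = all_edges n"
  define I where "I = edges_in A T"
  define B where "B = edges_between A T ({1..n} - T)"
  define t where "t = card T"
  have IB: "finite A" "I \<subseteq> A" "B \<subseteq> A" "I \<inter> B = {}"
    unfolding A_def I_def B_def edges_in_def edges_between_def
    using finite_all_edges by auto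
  have "measure_pmf.prob (gnp n q)
          {E. \<not> 2 * card (edges_in E T) \<le> card (edges_between E T ({1..n} - T))}
      \<le> measure_pmf.prob (Pi_pmf A False (\<lambda>_. bernoulli_pmf q)) {f. card {e\<in>B. f e} \<le> 2 * card {e\<in>I. f e}}"
    unfolding prob_gnp A_def[symmetric]
  proof (intro measure_pmf.finite_measure_mono subsetI)
    fix f assume "f \<in> {f. {e \<in> A. f e} \<in>
        {E. \<not> 2 * card (edges_in E T) \<le> card (edges_between E T ({1..n} - T))}}"
    hence "\<not> 2 * card (edges_in {e \<in> A. f e} T) \<le> card (edges_between {e \<in> A. f e} T ({1..n} - T))"
      by (simp only: mem_Collect_eq not_False_eq_True)
    moreover have "edges_in {e \<in> A. f e} T = {e\<in>I. f e}"
      unfolding I_def edges_in_def by auto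
    moreover have "edges_between {e \<in> A. f e} T ({1..n} - T) = {e\<in>B. f e}"
      unfolding B_def edges_between_def by auto
    ultimately show "f \<in> {f. card {e\<in>B. f e} \<le> 2 * card {e\<in>I. f e}}" by simp
  qed simp
  also have "\<dots> \<le> exp (q * (5/4 * card I - 1/3 * card B))"
    using IB q by (rule prob_Pi_bernoulli_card_le_twice)
  also have "\<dots> \<le> exp (- 17/120 * q * t * n)"
  proof -
    have "2 * card I \<le> t * (t - 1)"
      unfolding I_def A_def card_edges_in_all_edges[OF T(1)] choose_two t_def by simp
    hence inner: "2 * real (card I) \<le> real t * real t"
      by (metis diff_le_self mult_le_mono2 order_trans of_nat_mult of_nat_le_iff of_nat_numeral)
    have "real (t * (n - t)) = real t * (real n - real t)"
      using T(2) unfolding t_def by (simp add: of_nat_diff)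
    hence crossing: "real t * (real n - real t) \<le> real (card B)"
      using card_edges_between_all_edges_ge[OF T(1)] unfolding B_def A_def t_def by (metis of_nat_le_iff)
    have "real t * (5 * real t) \<le> real t * real n"
      using T(2) unfolding t_def by (intro mult_left_mono) auto
    hence "5/4 * real (card I) - 1/3 * real (card B) \<le> - 17/120 * real t * real n"
      using inner crossing by (simp add: algebra_simps)
    from mult_left_mono[OF this q(1)] show ?thesis by (simp add: algebra_simps)
  qed
  finally show ?thesis unfolding t_def .
qed

lemma pow_div_fact_le_exp:
  fixes x :: real assumes "0 \<le> x" shows "x ^ k / fact k \<le> exp x"
proof -
  have sm: "(\<lambda>i. x ^ i / fact i) sums exp x"
    using exp_converges[of x] by (simp add: divide_inverse mult.commute)
  have "(\<Sum>i\<in>{k}. x ^ i / fact i) \<le> (\<Sum>i. x ^ i / fact i)"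
    by (rule sum_le_suminf[OF sums_summable[OF sm]]) (use assms in auto)
  thus ?thesis using sums_unique[OF sm] by simp
qed

lemma binomial_le_exp_pow:
  assumes "0 < k" shows "real (n choose k) \<le> (exp 1 * real n / real k) ^ k"
proof -
  have fact_bound: "real (n choose k) * fact k \<le> real n ^ k"
    using binomial_fact_pow[of n k] by (metis of_nat_fact of_nat_le_iff of_nat_mult of_nat_power)
  have "real k ^ k \<le> exp (real k) * fact k"
    using pow_div_fact_le_exp[of "real k" k] by (simp add: divide_le_eq)
  hence "real (n choose k) * real k ^ k \<le> real (n choose k) * (exp (real k) * fact k)"
    by (intro mult_left_mono) auto
  also have "\<dots> \<le> real n ^ k * exp (real k)"
    using fact_bound by (simp add: algebra_simps)
  also have "exp (real k) = exp 1 ^ k" by (simp add: exp_of_nat_mult[symmetric])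
  finally show ?thesis
    using assms by (simp add: power_divide power_mult_distrib pos_le_divide_eq algebra_simps)
qed

text \<open>The threshold exp (75/7) is where e \<le> n^(7/75), so that
  e n^(1/25) n^(-17/120) \<le> n^(-1/120).\<close>
lemma binomial_mul_exp_le_powr:
  fixes n t :: nat and q :: real
  assumes n: "exp (75/7) \<le> real n" and t: "real n powr (24/25) \<le> real t"
    and qn: "q * real n \<ge> ln (real n)"
  shows "real (n choose t) * exp (- 17/120 * q * t * n) \<le> real n powr (- (real t / 120))"
proof -
  have npos: "0 < real n" using n exp_gt_zero[of "75/7::real"] by linarith
  have tpos: "0 < real t" using t npos by (smt (verit) powr_gt_zero)
  have per_edge: "exp (- 17/120 * q * t * n) \<le> (real n powr (-17/120)) ^ t"
  proof -
    have "exp (- 17/120 * q * t * n) \<le> exp (- 17/120 * real t * ln (real n))"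
      using qn tpos by (simp add: algebra_simps mult_left_mono)
    also have "\<dots> = (real n powr (-17/120)) ^ t"
      using npos by (simp add: powr_def exp_of_nat_mult[symmetric] algebra_simps)
    finally show ?thesis .
  qed
  have ratio: "exp 1 * real n / real t \<le> exp 1 * real n powr (1/25)"
  proof -
    have "exp 1 * real n / real t \<le> exp 1 * real n / real n powr (24/25)"
      using t npos tpos by (intro divide_left_mono) auto
    also have "\<dots> = exp 1 * (real n powr (24/25) * real n powr (1/25)) / real n powr (24/25)"
      using npos by (simp flip: powr_add)
    also have "\<dots> = exp 1 * real n powr (1/25)"
      using npos by simp
    finally show ?thesis .
  qed
  have e_le: "exp 1 \<le> real n powr (7/75)"
  proof -
    have "exp 1 = exp (75/7::real) powr (7/75)" by (simp add: powr_def)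
    also have "\<dots> \<le> real n powr (7/75)" using n by (intro powr_mono2) auto
    finally show ?thesis .
  qed
  have base: "exp 1 * real n powr (1/25) * real n powr (-17/120) \<le> real n powr (-1/120)"
  proof -
    have "real n powr (-1/120) = real n powr (7/75) * (real n powr (1/25) * real n powr (-17/120))"
      using npos by (simp flip: powr_add)
    thus ?thesis using e_le by (simp add: mult.assoc mult_right_mono)
  qed
  have "real (n choose t) * exp (- 17/120 * q * t * n)
      \<le> (exp 1 * real n / real t) ^ t * (real n powr (-17/120)) ^ t"
    using binomial_le_exp_pow[of t n] tpos per_edge by (intro mult_mono) auto
  also have "\<dots> \<le> (exp 1 * real n powr (1/25)) ^ t * (real n powr (-17/120)) ^ t"
    using ratio tpos by (intro mult_right_mono power_mono) auto
  also have "\<dots> = (exp 1 * real n powr (1/25) * real n powr (-17/120)) ^ t"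
    by (simp add: power_mult_distrib)
  also have "\<dots> \<le> (real n powr (-1/120)) ^ t"
    using base by (intro power_mono) auto
  also have "\<dots> = real n powr (- (real t / 120))"
    using npos by (simp add: powr_realpow[symmetric] powr_powr)
  finally show ?thesis .
qed

theorem mainTheorem17:
  fixes p :: "nat \<Rightarrow> real"
  assumes p_prob: "\<And>n. 0 \<le> p n \<and> p n \<le> 1"
    and p_large: "\<And>n. p n * real n \<ge> ln (real n)"
  shows "\<exists>N. \<forall>n\<ge>N. \<forall>t::nat.
           real n powr (24/25) \<le> real t \<and> real t \<le> real n / 5 \<longrightarrow>
           measure_pmf.prob (gnp n (p n))
             {E. \<forall>T. T \<subseteq> {1..n} \<and> card T = t \<longrightarrow>
                    card (edges_between E T ({1..n} - T)) \<ge> 2 * card (edges_in E T)}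
           \<ge> 1 - real n powr (- (real t / 120))"
proof (intro exI allI impI)
  fix n t :: nat
  assume "nat \<lceil>exp (75/7::real)\<rceil> \<le> n"
  hence n: "exp (75/7) \<le> real n" by linarith
  assume t: "real n powr (24/25) \<le> real t \<and> real t \<le> real n / 5"
  define \<T> where "\<T> = {T. T \<subseteq> {1..n} \<and> card T = t}"
  define bad where "bad T = {E. \<not> 2 * card (edges_in E T) \<le> card (edges_between E T ({1..n} - T))}" for T
  have fin: "finite \<T>" unfolding \<T>_def by (rule finite_subset[of _ "Pow {1..n}"]) auto
  have "measure_pmf.prob (gnp n (p n))
          {E. \<forall>T. T \<subseteq> {1..n} \<and> card T = t \<longrightarrow>
                 card (edges_between E T ({1..n} - T)) \<ge> 2 * card (edges_in E T)}
      = measure_pmf.prob (gnp n (p n))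
          {E. \<forall>T\<in>\<T>. 2 * card (edges_in E T) \<le> card (edges_between E T ({1..n} - T))}"
    (is "?good = _")
    unfolding \<T>_def by (intro arg_cong[where f = "measure_pmf.prob _"]) auto
  hence "?good \<ge> 1 - (\<Sum>T\<in>\<T>. measure_pmf.prob (gnp n (p n)) (bad T))"
    unfolding bad_def using prob_all_ge_one_minus_sum[OF fin] by simp
  moreover have "measure_pmf.prob (gnp n (p n)) (bad T) \<le> exp (- 17/120 * p n * t * n)"
    if "T \<in> \<T>" for T
  proof -
    have "5 * t \<le> n" using t by linarith
    thus ?thesis unfolding bad_def using that p_prob prob_gnp_few_crossing_edges by (auto simp: \<T>_def)
  qed
  hence "(\<Sum>T\<in>\<T>. measure_pmf.prob (gnp n (p n)) (bad T)) \<le> real (card \<T>) * exp (- 17/120 * p n * t * n)"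
    by (rule sum_bounded_above)
  moreover have "card \<T> = n choose t" unfolding \<T>_def using n_subsets[of "{1..n}" t] by simp
  moreover have "real (n choose t) * exp (- 17/120 * p n * t * n) \<le> real n powr (- (real t / 120))"
    using binomial_mul_exp_le_powr[OF n _ p_large] t by simp
  ultimately show "?good \<ge> 1 - real n powr (- (real t / 120))" by simp
qed

end
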